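(* Let $M$ be a smooth manifold of dimension $n$, let $\phi$ be a $1$-form on $M$ (not necessarily closed), let $t\in\mathbb{R}$, and let $F$ be a real-valued symmetric function ($F(a,b)=F(b,a)$) on $\{(a,b)\in\mathbb{Z}^2 \mid a+b\le n-1\}$. On $\mathfrak{h}=\bigoplus_{q=0}^{n}\Lambda^q T^*M$ define, for $\alpha\in\Lambda^aT^*M$ and $\beta\in\Lambda^bT^*M$, and extended bilinearly, $$[\alpha,\beta]_{t,\phi}=F(a,b)\,\alpha\wedge(t\phi)\wedge\beta .$$ Then $(\mathfrak{h},[\cdot,\cdot]_{t,\phi})$ is a Lie superalgebra.
   Context: $\Lambda^qT^*M$ denotes the space of smooth differential $q$-forms on $M$. In $\mathfrak{h}$ a $q$-form has degree $q'=-q-1$. A bracket on a $\mathbb{Z}$-graded space is a super bracket (making it a Lie superalgebra) if for homogeneous elements $P,Q,R$ of degrees $p',q',r'$: (super symmetry) $[P,Q]=-(-1)^{p'q'}[Q,P]$, and (super Jacobi identity) $[P,[Q,R]]=[[P,Q],R]+(-1)^{p'q'}[Q,[P,R]]$. *)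

theory Defs
  imports Complex_Main
begin

text \<open>An element of the exterior algebra of R^n (with basis e_0,...,e_{n-1}) is
represented by its coefficient function on index sets: alpha I is the coefficient of
e_I = e_{i_1} wedge ... wedge e_{i_k} (i_1 < ... < i_k, I = {i_1,...,i_k}).\<close>

type_synonym ext = "nat set \<Rightarrow> real"

definition ext_sign :: "nat set \<Rightarrow> nat set \<Rightarrow> real" where
  "ext_sign I J = (-1) ^ card {(i, j). i \<in> I \<and> j \<in> J \<and> j < i}"

text \<open>e_I wedge e_J = ext_sign I J * e_(I union J) if I, J disjoint, and 0 otherwise.\<close>
definition wedge :: "ext \<Rightarrow> ext \<Rightarrow> ext" where
  "wedge \<alpha> \<beta> = (\<lambda>K. if finite K
      then (\<Sum>I\<in>Pow K. ext_sign I (K - I) * \<alpha> I * \<beta> (K - I)) else 0)"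

definition ext_scale :: "real \<Rightarrow> ext \<Rightarrow> ext" where
  "ext_scale c \<alpha> = (\<lambda>I. c * \<alpha> I)"

definition ext_elem :: "nat \<Rightarrow> ext \<Rightarrow> bool" where
  "ext_elem n \<alpha> \<longleftrightarrow> (\<forall>I. \<alpha> I \<noteq> 0 \<longrightarrow> I \<subseteq> {..<n})"

definition ext_hom :: "nat \<Rightarrow> nat \<Rightarrow> ext \<Rightarrow> bool" where
  "ext_hom n q \<alpha> \<longleftrightarrow> (\<forall>I. \<alpha> I \<noteq> 0 \<longrightarrow> I \<subseteq> {..<n} \<and> card I = q)"

text \<open>A (possibly inhomogeneous) differential form on M assigns to each point x of M an
element of the exterior algebra of the cotangent space at x, identified with R^n.\<close>

type_synonym 'p form = "'p \<Rightarrow> ext"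

definition forms :: "nat \<Rightarrow> 'p form set" where
  "forms n = {P. \<forall>x. ext_elem n (P x)}"

definition is_qform :: "nat \<Rightarrow> nat \<Rightarrow> 'p form \<Rightarrow> bool" where
  "is_qform n q P \<longleftrightarrow> (\<forall>x. ext_hom n q (P x))"

definition form_add :: "'p form \<Rightarrow> 'p form \<Rightarrow> 'p form" where
  "form_add P Q = (\<lambda>x I. P x I + Q x I)"

definition form_smul :: "real \<Rightarrow> 'p form \<Rightarrow> 'p form" where
  "form_smul c P = (\<lambda>x I. c * P x I)"

definition form_proj :: "nat \<Rightarrow> 'p form \<Rightarrow> 'p form" where
  "form_proj q P = (\<lambda>x I. if card I = q then P x I else 0)"

definition h_grade :: "nat \<Rightarrow> int \<Rightarrow> 'p form set" where
  "h_grade n k = {P \<in> forms n. \<exists>q. k = - int q - 1 \<and> is_qform n q P}"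

definition bracket :: "nat \<Rightarrow> (int \<Rightarrow> int \<Rightarrow> real) \<Rightarrow> real \<Rightarrow> 'p form \<Rightarrow> 'p form \<Rightarrow> 'p form \<Rightarrow> 'p form" where
  "bracket n F t \<phi> P Q = (\<lambda>x K. \<Sum>a\<in>{0..n}. \<Sum>b\<in>{0..n}.
      ext_scale (F (int a) (int b))
        (wedge (wedge (form_proj a P x) (ext_scale t (\<phi> x))) (form_proj b Q x)) K)"

definition super_sign :: "int \<Rightarrow> int \<Rightarrow> real" where
  "super_sign p q = (-1) ^ nat \<bar>p * q\<bar>"

definition lie_superalgebra ::
  "'v set \<Rightarrow> (int \<Rightarrow> 'v set) \<Rightarrow> ('v \<Rightarrow> 'v \<Rightarrow> 'v) \<Rightarrow> ('v \<Rightarrow> 'v \<Rightarrow> 'v) \<Rightarrow> (real \<Rightarrow> 'v \<Rightarrow> 'v) \<Rightarrow> bool" where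
  "lie_superalgebra V grade br add smul \<longleftrightarrow>
     (\<forall>P\<in>V. \<forall>Q\<in>V. add P Q \<in> V \<and> br P Q \<in> V) \<and>
     (\<forall>c. \<forall>P\<in>V. smul c P \<in> V) \<and>
     (\<forall>k. grade k \<subseteq> V) \<and>
     (\<forall>P\<in>V. \<forall>Q\<in>V. \<forall>R\<in>V. \<forall>c.
        br (add P Q) R = add (br P R) (br Q R) \<and>
        br R (add P Q) = add (br R P) (br R Q) \<and>
        br (smul c P) Q = smul c (br P Q) \<and>
        br P (smul c Q) = smul c (br P Q)) \<and>
     (\<forall>p q P Q. P \<in> grade p \<longrightarrow> Q \<in> grade q \<longrightarrow> br P Q \<in> grade (p + q)) \<and>
     (\<forall>p q P Q. P \<in> grade p \<longrightarrow> Q \<in> grade q \<longrightarrow>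
        br P Q = smul (- super_sign p q) (br Q P)) \<and>
     (\<forall>p q r P Q R. P \<in> grade p \<longrightarrow> Q \<in> grade q \<longrightarrow> R \<in> grade r \<longrightarrow>
        br P (br Q R) = add (br (br P Q) R) (smul (super_sign p q) (br Q (br P R))))"

end

theory Submission
  imports Defs
begin

text \<open>On an \<open>a\<close>-form \<open>\<alpha>\<close> and a \<open>b\<close>-form \<open>\<beta>\<close> the bracket is \<open>F(a,b) \<alpha> \<and> \<psi> \<and> \<beta>\<close> with
  \<open>\<psi> = t\<phi>\<close> a 1-form. Graded commutativity of the wedge product gives
  \<open>\<beta> \<and> \<psi> \<and> \<alpha> = -(-1)^((a+1)(b+1)) \<alpha> \<and> \<psi> \<and> \<beta>\<close>, and \<open>(-1)^((a+1)(b+1))\<close> is the super sign of the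
  degrees \<open>-a-1\<close> and \<open>-b-1\<close>. So super-antisymmetry reduces to \<open>F(a,b) = F(b,a)\<close>, which is
  only needed for \<open>a + b + 1 \<le> n\<close>: otherwise \<open>\<alpha> \<and> \<psi> \<and> \<beta>\<close> vanishes for degree reasons.
  Every iterated bracket contains a factor \<open>\<psi> \<and> \<gamma> \<and> \<psi> = \<plusminus>\<gamma> \<and> \<psi> \<and> \<psi> = 0\<close>, so all three
  terms of the Jacobi identity vanish.\<close>

section \<open>Signs of shuffles\<close>

definition inversions :: "nat set \<Rightarrow> nat set \<Rightarrow> (nat \<times> nat) set" where
  "inversions I J = {(i, j) \<in> I \<times> J. j < i}"

lemma ext_sign_eq: "ext_sign I J = (-1) ^ card (inversions I J)"
  by (simp add: ext_sign_def inversions_def)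

lemma finite_inversions: "finite I \<Longrightarrow> finite J \<Longrightarrow> finite (inversions I J)"
  unfolding inversions_def by (rule finite_subset[of _ "I \<times> J"]) auto

lemma ext_sign_Un_left:
  assumes "A \<inter> B = {}" "finite A" "finite B" "finite C"
  shows "ext_sign (A \<union> B) C = ext_sign A C * ext_sign B C"
proof -
  have "inversions (A \<union> B) C = inversions A C \<union> inversions B C"
    by (auto simp: inversions_def)
  moreover have "inversions A C \<inter> inversions B C = {}"
    using assms(1) by (auto simp: inversions_def)
  ultimately show ?thesis
    using assms by (simp add: ext_sign_eq card_Un_disjoint finite_inversions power_add)
qed

lemma ext_sign_Un_right:
  assumes "B \<inter> C = {}" "finite A" "finite B" "finite C"
  shows "ext_sign A (B \<union> C) = ext_sign A B * ext_sign A C"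
proof -
  have "inversions A (B \<union> C) = inversions A B \<union> inversions A C"
    by (auto simp: inversions_def)
  moreover have "inversions A B \<inter> inversions A C = {}"
    using assms(1) by (auto simp: inversions_def)
  ultimately show ?thesis
    using assms by (simp add: ext_sign_eq card_Un_disjoint finite_inversions power_add)
qed

lemma card_inversions_swap:
  assumes "I \<inter> J = {}" "finite I" "finite J"
  shows "card (inversions I J) + card (inversions J I) = card I * card J"
proof -
  have "I \<times> J = inversions I J \<union> prod.swap ` inversions J I"
    using assms(1) by (auto simp: inversions_def image_iff dest: nat_neq_iff[THEN iffD1])
  moreover have "inversions I J \<inter> prod.swap ` inversions J I = {}"
    by (auto simp: inversions_def)
  ultimately have "card (I \<times> J) = card (inversions I J) + card (prod.swap ` inversions J I)"
    using assms by (simp add: card_Un_disjoint finite_inversions)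
  then show ?thesis
    by (simp add: card_image card_cartesian_product)
qed

lemma ext_sign_swap:
  assumes "I \<inter> J = {}" "finite I" "finite J"
  shows "ext_sign I J = (-1) ^ (card I * card J) * ext_sign J I"
proof -
  have "(-1::real) ^ (card I * card J) * ext_sign J I
      = (-1) ^ card (inversions I J) * ((-1) ^ card (inversions J I) * (-1) ^ card (inversions J I))"
    by (simp add: ext_sign_eq power_add flip: card_inversions_swap[OF assms])
  then show ?thesis
    by (simp add: ext_sign_eq)
qed

lemma ext_sign_assoc:
  assumes "A \<subseteq> I" "I \<subseteq> K" "finite K"
  shows "ext_sign A (I - A) * ext_sign I (K - I) = ext_sign A (K - A) * ext_sign (I - A) (K - I)"
proof -
  have fin: "finite A" "finite (I - A)" "finite (K - I)"
    using assms by (auto intro: finite_subset)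
  have split_I: "I = A \<union> (I - A)" and split_KA: "K - A = (I - A) \<union> (K - I)"
    using assms by auto
  have "ext_sign I (K - I) = ext_sign A (K - I) * ext_sign (I - A) (K - I)"
    using fin by (subst split_I) (rule ext_sign_Un_left, auto)
  moreover have "ext_sign A (K - A) = ext_sign A (I - A) * ext_sign A (K - I)"
    using fin by (subst split_KA) (rule ext_sign_Un_right, auto)
  ultimately show ?thesis
    by simp
qed

section \<open>The wedge product\<close>

definition ext_homogeneous :: "nat \<Rightarrow> ext \<Rightarrow> bool" where
  "ext_homogeneous q \<alpha> \<longleftrightarrow> (\<forall>I. \<alpha> I \<noteq> 0 \<longrightarrow> card I = q)"

lemma ext_hom_iff: "ext_hom n q \<alpha> \<longleftrightarrow> ext_elem n \<alpha> \<and> ext_homogeneous q \<alpha>"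
  by (auto simp: ext_hom_def ext_elem_def ext_homogeneous_def)

lemma ext_homogeneous_scale: "ext_homogeneous q \<alpha> \<Longrightarrow> ext_homogeneous q (ext_scale c \<alpha>)"
  by (simp add: ext_homogeneous_def ext_scale_def)

lemma ext_elem_scale: "ext_elem n \<alpha> \<Longrightarrow> ext_elem n (ext_scale c \<alpha>)"
  by (simp add: ext_elem_def ext_scale_def)

lemma ext_elem_card_le: "ext_elem n \<alpha> \<Longrightarrow> \<alpha> I \<noteq> 0 \<Longrightarrow> card I \<le> n"
  unfolding ext_elem_def by (metis card_lessThan card_mono finite_lessThan)

lemma ext_elem_sum:
  assumes "\<And>a. a \<in> A \<Longrightarrow> ext_elem n (f a)"
  shows "ext_elem n (\<lambda>K. \<Sum>a\<in>A. f a K)"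
  unfolding ext_elem_def
proof (intro allI impI)
  fix K
  assume "(\<Sum>a\<in>A. f a K) \<noteq> 0"
  then obtain a where "a \<in> A" "f a K \<noteq> 0"
    by (rule sum.not_neutral_contains_not_neutral)
  then show "K \<subseteq> {..<n}"
    using assms unfolding ext_elem_def by blast
qed

lemma wedge_eq: "finite K \<Longrightarrow> wedge \<alpha> \<beta> K = (\<Sum>I\<in>Pow K. ext_sign I (K - I) * \<alpha> I * \<beta> (K - I))"
  by (simp add: wedge_def)

lemma wedge_nonzero_split:
  assumes "wedge \<alpha> \<beta> K \<noteq> 0"
  obtains I where "finite K" "I \<subseteq> K" "\<alpha> I \<noteq> 0" "\<beta> (K - I) \<noteq> 0"
proof -
  have "finite K"
    using assms by (auto simp: wedge_def split: if_splits)
  moreover obtain I where "I \<in> Pow K" "ext_sign I (K - I) * \<alpha> I * \<beta> (K - I) \<noteq> 0"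
    using assms unfolding wedge_eq[OF \<open>finite K\<close>] by (rule sum.not_neutral_contains_not_neutral)
  ultimately show ?thesis
    using that by simp
qed

lemma ext_homogeneous_wedge:
  assumes "ext_homogeneous a \<alpha>" "ext_homogeneous b \<beta>"
  shows "ext_homogeneous (a + b) (wedge \<alpha> \<beta>)"
  unfolding ext_homogeneous_def
proof (intro allI impI)
  fix K
  assume "wedge \<alpha> \<beta> K \<noteq> 0"
  then obtain I where I: "finite K" "I \<subseteq> K" "\<alpha> I \<noteq> 0" "\<beta> (K - I) \<noteq> 0"
    by (rule wedge_nonzero_split)
  then have "card I = a" "card (K - I) = b"
    using assms by (auto simp: ext_homogeneous_def)
  moreover have "card K = card I + card (K - I)"
    using I by (metis card_Diff_subset card_mono finite_subset le_add_diff_inverse)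
  ultimately show "card K = a + b"
    by simp
qed

lemma ext_elem_wedge:
  assumes "ext_elem n \<alpha>" "ext_elem n \<beta>"
  shows "ext_elem n (wedge \<alpha> \<beta>)"
  unfolding ext_elem_def
proof (intro allI impI)
  fix K
  assume "wedge \<alpha> \<beta> K \<noteq> 0"
  then obtain I where "I \<subseteq> K" "\<alpha> I \<noteq> 0" "\<beta> (K - I) \<noteq> 0"
    by (rule wedge_nonzero_split)
  then show "K \<subseteq> {..<n}"
    using assms unfolding ext_elem_def by blast
qed

lemma ext_hom_wedge:
  "ext_hom n a \<alpha> \<Longrightarrow> ext_hom n b \<beta> \<Longrightarrow> ext_hom n (a + b) (wedge \<alpha> \<beta>)"
  by (simp add: ext_hom_iff ext_elem_wedge ext_homogeneous_wedge)

lemma ext_hom_scale: "ext_hom n q \<alpha> \<Longrightarrow> ext_hom n q (ext_scale c \<alpha>)"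
  by (simp add: ext_hom_iff ext_elem_scale ext_homogeneous_scale)

lemma ext_hom_degree_le: "ext_hom n q \<alpha> \<Longrightarrow> \<alpha> K \<noteq> 0 \<Longrightarrow> q \<le> n"
  by (metis ext_elem_card_le ext_hom_def ext_hom_iff)

lemma wedge_zero_left [simp]: "wedge (\<lambda>_. 0) \<beta> = (\<lambda>_. 0)"
  by (simp add: wedge_def fun_eq_iff)

lemma wedge_zero_right [simp]: "wedge \<alpha> (\<lambda>_. 0) = (\<lambda>_. 0)"
  by (simp add: wedge_def fun_eq_iff)

lemma wedge_add_left: "wedge (\<lambda>I. \<alpha> I + \<beta> I) \<gamma> = (\<lambda>K. wedge \<alpha> \<gamma> K + wedge \<beta> \<gamma> K)"
  by (simp add: wedge_def fun_eq_iff sum.distrib algebra_simps)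

lemma wedge_add_right: "wedge \<gamma> (\<lambda>I. \<alpha> I + \<beta> I) = (\<lambda>K. wedge \<gamma> \<alpha> K + wedge \<gamma> \<beta> K)"
  by (simp add: wedge_def fun_eq_iff sum.distrib algebra_simps)

lemma wedge_scale_left: "wedge (ext_scale c \<alpha>) \<beta> = ext_scale c (wedge \<alpha> \<beta>)"
  by (simp add: wedge_def ext_scale_def fun_eq_iff sum_distrib_left algebra_simps)

lemma wedge_scale_right: "wedge \<alpha> (ext_scale c \<beta>) = ext_scale c (wedge \<alpha> \<beta>)"
  by (simp add: wedge_def ext_scale_def fun_eq_iff sum_distrib_left algebra_simps)

lemma wedge_wedge_left_eq:
  assumes "finite K"
  shows "wedge (wedge \<alpha> \<beta>) \<gamma> K = (\<Sum>(I, A)\<in>Sigma (Pow K) Pow.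
    ext_sign A (I - A) * ext_sign I (K - I) * \<alpha> A * \<beta> (I - A) * \<gamma> (K - I))"
proof -
  have "wedge (wedge \<alpha> \<beta>) \<gamma> K = (\<Sum>I\<in>Pow K. \<Sum>A\<in>Pow I.
      ext_sign A (I - A) * ext_sign I (K - I) * \<alpha> A * \<beta> (I - A) * \<gamma> (K - I))"
    unfolding wedge_eq[OF assms]
  proof (intro sum.cong refl)
    fix I
    assume "I \<in> Pow K"
    then have "finite I"
      using assms finite_subset by auto
    then show "ext_sign I (K - I) * wedge \<alpha> \<beta> I * \<gamma> (K - I) = (\<Sum>A\<in>Pow I.
        ext_sign A (I - A) * ext_sign I (K - I) * \<alpha> A * \<beta> (I - A) * \<gamma> (K - I))"
      by (simp add: wedge_eq sum_distrib_left sum_distrib_right algebra_simps)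
  qed
  also have "\<dots> = (\<Sum>(I, A)\<in>Sigma (Pow K) Pow.
      ext_sign A (I - A) * ext_sign I (K - I) * \<alpha> A * \<beta> (I - A) * \<gamma> (K - I))"
    by (rule sum.Sigma) (use assms finite_subset in auto)
  finally show ?thesis .
qed

lemma wedge_wedge_right_eq:
  assumes "finite K"
  shows "wedge \<alpha> (wedge \<beta> \<gamma>) K = (\<Sum>(A, B)\<in>Sigma (Pow K) (\<lambda>A. Pow (K - A)).
    ext_sign A (K - A) * ext_sign B (K - A - B) * \<alpha> A * \<beta> B * \<gamma> (K - A - B))"
proof -
  have "wedge \<alpha> (wedge \<beta> \<gamma>) K = (\<Sum>A\<in>Pow K. \<Sum>B\<in>Pow (K - A).
      ext_sign A (K - A) * ext_sign B (K - A - B) * \<alpha> A * \<beta> B * \<gamma> (K - A - B))"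
    unfolding wedge_eq[OF assms]
    by (intro sum.cong refl) (use assms in \<open>simp add: wedge_eq sum_distrib_left algebra_simps\<close>)
  also have "\<dots> = (\<Sum>(A, B)\<in>Sigma (Pow K) (\<lambda>A. Pow (K - A)).
      ext_sign A (K - A) * ext_sign B (K - A - B) * \<alpha> A * \<beta> B * \<gamma> (K - A - B))"
    by (rule sum.Sigma) (use assms finite_subset in auto)
  finally show ?thesis .
qed

text \<open>Both sides are sums over the splittings of \<open>K\<close> into three disjoint parts; the
  reindexing \<open>(I, A) \<mapsto> (A, I - A)\<close> matches them, and \<open>ext_sign_assoc\<close> matches the signs.\<close>
lemma wedge_assoc: "wedge (wedge \<alpha> \<beta>) \<gamma> = wedge \<alpha> (wedge \<beta> \<gamma>)"
proof
  fix K
  show "wedge (wedge \<alpha> \<beta>) \<gamma> K = wedge \<alpha> (wedge \<beta> \<gamma>) K"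
  proof (cases "finite K")
    case False
    then show ?thesis
      by (simp add: wedge_def)
  next
    case True
    show ?thesis
      unfolding wedge_wedge_left_eq[OF True] wedge_wedge_right_eq[OF True]
    proof (rule sum.reindex_bij_witness[where j = "\<lambda>(I, A). (A, I - A)" and i = "\<lambda>(A, B). (A \<union> B, A)"])
      fix p
      assume "p \<in> Sigma (Pow K) Pow"
      then obtain I A where p: "p = (I, A)" "A \<subseteq> I" "I \<subseteq> K"
        by auto
      then have "K - A - (I - A) = K - I"
        by auto
      then show "(case case p of (I, A) \<Rightarrow> (A, I - A) of (A, B) \<Rightarrow>
            ext_sign A (K - A) * ext_sign B (K - A - B) * \<alpha> A * \<beta> B * \<gamma> (K - A - B))
          = (case p of (I, A) \<Rightarrow>
            ext_sign A (I - A) * ext_sign I (K - I) * \<alpha> A * \<beta> (I - A) * \<gamma> (K - I))"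
        using ext_sign_assoc[OF p(2,3) True] p(1) by simp
    qed auto
  qed
qed

lemma wedge_commute:
  assumes "ext_homogeneous a \<alpha>" "ext_homogeneous b \<beta>"
  shows "wedge \<alpha> \<beta> = ext_scale ((-1) ^ (a * b)) (wedge \<beta> \<alpha>)"
proof
  fix K
  show "wedge \<alpha> \<beta> K = ext_scale ((-1) ^ (a * b)) (wedge \<beta> \<alpha>) K"
  proof (cases "finite K")
    case False
    then show ?thesis
      by (simp add: wedge_def ext_scale_def)
  next
    case True
    show ?thesis
      unfolding ext_scale_def wedge_eq[OF True] sum_distrib_left
    proof (rule sum.reindex_bij_witness[where i = "\<lambda>J. K - J" and j = "\<lambda>I. K - I"])
      fix I
      assume I: "I \<in> Pow K"
      then have KKI: "K - (K - I) = I"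
        by auto
      show "(-1) ^ (a * b) * (ext_sign (K - I) (K - (K - I)) * \<beta> (K - I) * \<alpha> (K - (K - I)))
          = ext_sign I (K - I) * \<alpha> I * \<beta> (K - I)"
      proof (cases "\<alpha> I = 0 \<or> \<beta> (K - I) = 0")
        case True
        then show ?thesis
          by (auto simp: KKI)
      next
        case False
        then have "card I = a" "card (K - I) = b"
          using assms by (auto simp: ext_homogeneous_def)
        moreover have "finite I"
          using I True by (simp add: finite_subset[of I K])
        ultimately have "ext_sign I (K - I) = (-1) ^ (a * b) * ext_sign (K - I) I"
          using ext_sign_swap[of I "K - I"] True by auto
        then show ?thesis
          by (simp add: KKI)
      qed
    qed auto
  qed
qed

lemma wedge_one_form_self:
  assumes "ext_homogeneous 1 \<psi>"
  shows "wedge \<psi> \<psi> = (\<lambda>_. 0)"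
  using wedge_commute[OF assms assms] by (auto simp: ext_scale_def fun_eq_iff)

lemma wedge_one_form_sandwich:
  assumes "ext_homogeneous 1 \<psi>" "ext_homogeneous b \<beta>"
  shows "wedge \<psi> (wedge \<beta> (wedge \<psi> \<gamma>)) = (\<lambda>_. 0)"
proof -
  have "wedge (wedge \<psi> \<beta>) \<psi> = ext_scale ((-1) ^ b) (wedge \<beta> (wedge \<psi> \<psi>))"
    by (simp only: wedge_commute[OF assms] wedge_scale_left wedge_assoc mult_1)
  also have "\<dots> = (\<lambda>_. 0)"
    by (simp add: wedge_one_form_self[OF assms(1)] ext_scale_def)
  finally show ?thesis
    by (metis wedge_assoc wedge_zero_left)
qed

lemma wedge_one_form_swap:
  assumes "ext_homogeneous a \<alpha>" "ext_homogeneous b \<beta>" "ext_homogeneous 1 \<psi>"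
  shows "wedge (wedge \<beta> \<psi>) \<alpha> = ext_scale (- ((-1) ^ ((a + 1) * (b + 1)))) (wedge (wedge \<alpha> \<psi>) \<beta>)"
proof -
  have "wedge (wedge \<beta> \<psi>) \<alpha> = ext_scale ((-1) ^ ((b + 1) * a)) (wedge \<alpha> (wedge \<beta> \<psi>))"
    using wedge_commute[OF ext_homogeneous_wedge[OF assms(2,3)] assms(1)] .
  also have "\<dots> = ext_scale ((-1) ^ ((b + 1) * a) * (-1) ^ b) (wedge (wedge \<alpha> \<psi>) \<beta>)"
    by (simp add: wedge_commute[OF assms(2,3)] wedge_scale_right wedge_assoc)
      (simp add: ext_scale_def mult.assoc)
  also have "(-1::real) ^ ((b + 1) * a) * (-1) ^ b = - ((-1) ^ ((a + 1) * (b + 1)))"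
  proof -
    have "(a + 1) * (b + 1) = (b + 1) * a + b + 1"
      by (simp add: algebra_simps)
    then show ?thesis
      by (simp only: power_add power_one_right)
  qed
  finally show ?thesis .
qed

section \<open>The bracket on forms\<close>

lemma is_qform_in_forms: "is_qform n q P \<Longrightarrow> P \<in> forms n"
  by (simp add: is_qform_def forms_def ext_hom_iff)

lemma form_add_in_forms:
  assumes "P \<in> forms n" "Q \<in> forms n"
  shows "form_add P Q \<in> forms n"
  unfolding forms_def ext_elem_def form_add_def
proof (intro CollectI allI impI)
  fix x I
  assume "P x I + Q x I \<noteq> 0"
  then have "P x I \<noteq> 0 \<or> Q x I \<noteq> 0"
    by auto
  then show "I \<subseteq> {..<n}"
    using assms unfolding forms_def ext_elem_def by blast
qed

lemma form_smul_in_forms: "P \<in> forms n \<Longrightarrow> form_smul c P \<in> forms n"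
  by (auto simp: forms_def ext_elem_def form_smul_def)

lemma form_proj_add: "form_proj q (form_add P Q) x = (\<lambda>I. form_proj q P x I + form_proj q Q x I)"
  by (simp add: form_proj_def form_add_def fun_eq_iff)

lemma form_proj_smul: "form_proj q (form_smul c P) x = ext_scale c (form_proj q P x)"
  by (simp add: form_proj_def form_smul_def ext_scale_def fun_eq_iff)

lemma form_proj_qform: "is_qform n q P \<Longrightarrow> form_proj p P x = (if p = q then P x else (\<lambda>_. 0))"
  by (auto simp: is_qform_def ext_hom_def form_proj_def fun_eq_iff)

lemma qform_eq_zero_if_gt:
  assumes "is_qform n q P" "n < q"
  shows "P x = (\<lambda>_. 0)"
proof
  fix I
  show "P x I = 0"
    using assms ext_elem_card_le[of n "P x" I]
    unfolding is_qform_def ext_hom_iff ext_homogeneous_def by fastforce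
qed

lemma bracket_add_left:
  "bracket n F t \<phi> (form_add P Q) R = form_add (bracket n F t \<phi> P R) (bracket n F t \<phi> Q R)"
  unfolding bracket_def form_proj_add
  by (simp add: wedge_add_left ext_scale_def form_add_def sum.distrib algebra_simps)

lemma bracket_add_right:
  "bracket n F t \<phi> R (form_add P Q) = form_add (bracket n F t \<phi> R P) (bracket n F t \<phi> R Q)"
  unfolding bracket_def form_proj_add
  by (simp add: wedge_add_right ext_scale_def form_add_def sum.distrib algebra_simps)

lemma bracket_smul_left: "bracket n F t \<phi> (form_smul c P) Q = form_smul c (bracket n F t \<phi> P Q)"
  unfolding bracket_def form_proj_smul wedge_scale_left
  by (simp add: ext_scale_def form_smul_def sum_distrib_left algebra_simps)

lemma bracket_smul_right: "bracket n F t \<phi> P (form_smul c Q) = form_smul c (bracket n F t \<phi> P Q)"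
  unfolding bracket_def form_proj_smul wedge_scale_right
  by (simp add: ext_scale_def form_smul_def sum_distrib_left algebra_simps)

lemma bracket_in_forms:
  assumes "is_qform n 1 \<phi>" "P \<in> forms n" "Q \<in> forms n"
  shows "bracket n F t \<phi> P Q \<in> forms n"
proof -
  have "ext_elem n (form_proj q P x)" "ext_elem n (form_proj q Q x)" "ext_elem n (\<phi> x)" for q x
    using assms by (auto simp: forms_def ext_elem_def form_proj_def is_qform_def ext_hom_iff)
  then have "ext_elem n (ext_scale (F a b)
      (wedge (wedge (form_proj a P x) (ext_scale t (\<phi> x))) (form_proj b Q x)))" for a b x
    by (intro ext_elem_scale ext_elem_wedge)
  then show ?thesis
    unfolding forms_def bracket_def by (auto intro!: ext_elem_sum)
qed

lemma bracket_qforms: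
  assumes P: "is_qform n a P" and Q: "is_qform n b Q"
  shows "bracket n F t \<phi> P Q x = ext_scale (F a b) (wedge (wedge (P x) (ext_scale t (\<phi> x))) (Q x))"
    (is "_ = ?X")
proof -
  have "ext_scale (F (int a') (int b')) (wedge (wedge (form_proj a' P x) (ext_scale t (\<phi> x)))
      (form_proj b' Q x)) K = (if b' = b then if a' = a then ?X K else 0 else 0)" for a' b' K
    by (simp add: form_proj_qform[OF P] form_proj_qform[OF Q] ext_scale_def)
  then have "bracket n F t \<phi> P Q x = (\<lambda>K. if b \<le> n then if a \<le> n then ?X K else 0 else 0)"
    by (cases "b \<le> n") (simp_all add: bracket_def)
  moreover have "?X = (\<lambda>_. 0)" if "\<not> (a \<le> n \<and> b \<le> n)"
    using that qform_eq_zero_if_gt[OF P, of x] qform_eq_zero_if_gt[OF Q, of x]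
    by (auto simp: ext_scale_def)
  ultimately show ?thesis
    by (auto simp: fun_eq_iff)
qed

lemma is_qform_bracket:
  assumes "is_qform n 1 \<phi>" "is_qform n a P" "is_qform n b Q"
  shows "is_qform n (a + b + 1) (bracket n F t \<phi> P Q)"
proof -
  have "ext_hom n (a + 1 + b) (bracket n F t \<phi> P Q x)" for x
    using assms unfolding is_qform_def bracket_qforms[OF assms(2,3)]
    by (intro ext_hom_scale ext_hom_wedge) auto
  then show ?thesis
    by (simp add: is_qform_def add.commute add.left_commute)
qed

lemma bracket_qforms_swap:
  assumes \<phi>: "is_qform n 1 \<phi>" and F_sym: "\<And>a b. a + b \<le> int n - 1 \<Longrightarrow> F a b = F b a"
    and P: "is_qform n a P" and Q: "is_qform n b Q"
  shows "bracket n F t \<phi> P Q = form_smul (- ((-1) ^ ((a + 1) * (b + 1)))) (bracket n F t \<phi> Q P)"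
proof (intro ext)
  fix x K
  let ?W = "wedge (wedge (P x) (ext_scale t (\<phi> x))) (Q x)"
  have hom: "ext_hom n a (P x)" "ext_hom n b (Q x)" "ext_hom n 1 (ext_scale t (\<phi> x))"
    using assms by (auto simp: is_qform_def intro: ext_hom_scale)
  have "F a b * ?W K = F b a * ?W K"
  proof (cases "?W K = 0")
    case False
    then have "a + 1 + b \<le> n"
      using ext_hom_degree_le[OF ext_hom_wedge[OF ext_hom_wedge[OF hom(1,3)] hom(2)]] by blast
    then show ?thesis
      using F_sym by simp
  qed simp
  moreover have "wedge (wedge (Q x) (ext_scale t (\<phi> x))) (P x)
      = ext_scale (- ((-1) ^ ((a + 1) * (b + 1)))) ?W"
    using hom by (intro wedge_one_form_swap) (auto simp: ext_hom_iff)
  ultimately show "bracket n F t \<phi> P Q x K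
      = form_smul (- ((-1) ^ ((a + 1) * (b + 1)))) (bracket n F t \<phi> Q P) x K"
    by (simp add: form_smul_def bracket_qforms[OF P Q] bracket_qforms[OF Q P] ext_scale_def
        mult_ac)
qed

lemma bracket_bracket_right_eq_zero:
  assumes \<phi>: "is_qform n 1 \<phi>" and P: "is_qform n a P" and Q: "is_qform n b Q" and R: "is_qform n c R"
  shows "bracket n F t \<phi> P (bracket n F t \<phi> Q R) = (\<lambda>_ _. 0)"
proof
  fix x
  have "wedge (\<phi> x) (wedge (Q x) (wedge (\<phi> x) \<gamma>)) = (\<lambda>_. 0)" for \<gamma>
    using \<phi> Q by (intro wedge_one_form_sandwich) (auto simp: is_qform_def ext_hom_iff)
  then show "bracket n F t \<phi> P (bracket n F t \<phi> Q R) x = (\<lambda>_. 0)"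
    unfolding bracket_qforms[OF P is_qform_bracket[OF \<phi> Q R]] bracket_qforms[OF Q R]
    by (simp add: wedge_scale_left wedge_scale_right wedge_assoc) (simp add: ext_scale_def)
qed

lemma bracket_bracket_left_eq_zero:
  assumes \<phi>: "is_qform n 1 \<phi>" and P: "is_qform n a P" and Q: "is_qform n b Q" and R: "is_qform n c R"
  shows "bracket n F t \<phi> (bracket n F t \<phi> P Q) R = (\<lambda>_ _. 0)"
proof
  fix x
  have "wedge (\<phi> x) (wedge (Q x) (wedge (\<phi> x) \<gamma>)) = (\<lambda>_. 0)" for \<gamma>
    using \<phi> Q by (intro wedge_one_form_sandwich) (auto simp: is_qform_def ext_hom_iff)
  then show "bracket n F t \<phi> (bracket n F t \<phi> P Q) R x = (\<lambda>_. 0)"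
    unfolding bracket_qforms[OF is_qform_bracket[OF \<phi> P Q] R] bracket_qforms[OF P Q]
    by (simp add: wedge_scale_left wedge_scale_right wedge_assoc) (simp add: ext_scale_def)
qed

lemma super_sign_form_degrees:
  "super_sign (- int a - 1) (- int b - 1) = (-1) ^ ((a + 1) * (b + 1))"
proof -
  have "(- int a - 1) * (- int b - 1) = int ((a + 1) * (b + 1))"
    by (simp add: algebra_simps)
  then show ?thesis
    unfolding super_sign_def by (simp only: abs_of_nat nat_int)
qed

theorem mainTheorem1:
  fixes n :: nat and \<phi> :: "'p form" and t :: real and F :: "int \<Rightarrow> int \<Rightarrow> real"
  assumes phi_one_form: "is_qform n 1 \<phi>"
    and F_sym: "\<And>a b. a + b \<le> int n - 1 \<Longrightarrow> F a b = F b a"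
  shows "lie_superalgebra (forms n) (h_grade n) (bracket n F t \<phi>) form_add form_smul"
proof -
  have grade_iff: "P \<in> h_grade n p \<longleftrightarrow> (\<exists>q. p = - int q - 1 \<and> is_qform n q P)" for P p
    using is_qform_in_forms by (auto simp: h_grade_def)
  show ?thesis
    unfolding lie_superalgebra_def
  proof (intro conjI allI ballI impI)
    fix p q r and P Q R :: "'p form"
    assume "P \<in> h_grade n p" "Q \<in> h_grade n q"
    then obtain a b where P: "p = - int a - 1" "is_qform n a P" and Q: "q = - int b - 1" "is_qform n b Q"
      unfolding grade_iff by blast
    show "bracket n F t \<phi> P Q \<in> h_grade n (p + q)"
      unfolding grade_iff using P Q is_qform_bracket[OF phi_one_form P(2) Q(2)]
      by (intro exI[of _ "a + b + 1"]) simp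
    show "bracket n F t \<phi> P Q = form_smul (- super_sign p q) (bracket n F t \<phi> Q P)"
      unfolding P(1) Q(1) super_sign_form_degrees by (rule bracket_qforms_swap) fact+
    assume "R \<in> h_grade n r"
    then obtain c where "is_qform n c R"
      unfolding grade_iff by blast
    then show "bracket n F t \<phi> P (bracket n F t \<phi> Q R)
      = form_add (bracket n F t \<phi> (bracket n F t \<phi> P Q) R)
          (form_smul (super_sign p q) (bracket n F t \<phi> Q (bracket n F t \<phi> P R)))"
      by (simp add: bracket_bracket_right_eq_zero[OF phi_one_form P(2) Q(2)]
          bracket_bracket_right_eq_zero[OF phi_one_form Q(2) P(2)]
          bracket_bracket_left_eq_zero[OF phi_one_form P(2) Q(2)] form_add_def form_smul_def)
  qed (auto simp: h_grade_def form_add_in_forms form_smul_in_forms bracket_in_forms[OF phi_one_form]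
      bracket_add_left bracket_add_right bracket_smul_left bracket_smul_right)
qed

end
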